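(* In the adversarial edge arrival model for integral matchings, no online algorithm (deterministic or randomized) achieves a guarantee larger than $0.58065$ on graphs of maximum degree three. That is, for every online algorithm $\mathcal{ALG}$ and every $\gamma>0.58065$ there is an instance (a graph of maximum degree at most three with an adversarial edge arrival order) and a timepoint $t$ at which $\mathbb{E}[|M_t|] < \gamma\,\nu(G_t)$, where $M_t$ is the matching held by $\mathcal{ALG}$ at time $t$.
   Context: Adversarial edge arrival model for integral matchings: edges arrive one at a time in an order chosen by an (oblivious) adversary; upon arrival of an edge, the algorithm must immediately and irrevocably decide whether to add it to its current matching (which must remain a matching). A (possibly randomized) algorithm achieves guarantee $\gamma$ if at every timepoint the expected size of its matching is at least $\gamma\cdot\nu(G_t)$, where $\nu(G_t)$ is the maximum matching cardinality of the arrived graph $G_t$. *)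

theory Defs
  imports "HOL-Probability.Probability"
begin

text \<open>Vertices are natural numbers; an (undirected) edge is a 2-element vertex set.
An instance is the adversarial arrival sequence: a list of edges, edge number i arrives at time i+1.\<close>

type_synonym edge = "nat set"

definition is_matching :: "edge set \<Rightarrow> bool" where
  "is_matching M \<longleftrightarrow> (\<forall>e\<in>M. \<forall>f\<in>M. e \<noteq> f \<longrightarrow> e \<inter> f = {})"

definition nu :: "edge set \<Rightarrow> nat" where
  "nu E = Max {card M | M. M \<subseteq> E \<and> is_matching M}"

definition valid_instance_deg3 :: "edge list \<Rightarrow> bool" where
  "valid_instance_deg3 es \<longleftrightarrow> distinct es \<and> (\<forall>e\<in>set es. card e = 2)
     \<and> (\<forall>v. card {e \<in> set es. v \<in> e} \<le> 3)"

text \<open>An online algorithm (possibly randomized) in behavioural form: given the edges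
arrived so far (the last one being the current edge) and its own previous decisions,
it returns the probability of accepting the current edge (values are clamped to [0,1]).
Deterministic algorithms are those returning only 0 or 1.\<close>
type_synonym online_alg = "edge list \<Rightarrow> bool list \<Rightarrow> real"

definition matched :: "edge list \<Rightarrow> bool list \<Rightarrow> edge set" where
  "matched es ds = {es ! i | i. i < length ds \<and> ds ! i}"

fun run :: "online_alg \<Rightarrow> edge list \<Rightarrow> nat \<Rightarrow> bool list pmf" where
  "run alg es 0 = return_pmf []"
| "run alg es (Suc n) =
     bind_pmf (run alg es n) (\<lambda>ds.
       bind_pmf
         (if (\<forall>f\<in>matched es ds. f \<inter> es ! n = {})
          then bernoulli_pmf (alg (take (Suc n) es) ds)
          else return_pmf False)
         (\<lambda>b. return_pmf (ds @ [b])))"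

definition expected_size :: "online_alg \<Rightarrow> edge list \<Rightarrow> nat \<Rightarrow> real" where
  "expected_size alg es t =
     measure_pmf.expectation (run alg es t) (\<lambda>ds. real (card (matched es ds)))"

end

theory Submission
  imports Defs
begin

text \<open>The adversary opens with two edges at a common vertex. It then either closes a
triangle with a pendant edge (a paw, optimum 2), or grows a caterpillar in which every
second arrival raises the optimum by one. The acceptance probability of an edge depends
only on the arrivals up to it, so the algorithm must fix its behaviour on the first two
edges before learning the continuation. Edges through a common vertex, or of a triangle,
have acceptance probabilities summing to at most one. These packing constraints, together
with the guarantee at the times 1, 3, ..., 19 of the caterpillar and at the end of the
paw, form a linear program whose dual, with Fibonacci weights, yields \<open>341 \<gamma> \<le> 198\<close>;
and 198/341 < 0.58065.\<close>

lemma length_run: "ds \<in> set_pmf (run alg es n) \<Longrightarrow> length ds = n"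
  by (induction n arbitrary: ds) (auto split: if_splits)

lemma set_pmf_run_Suc:
  assumes "ds \<in> set_pmf (run alg es (Suc n))"
  obtains ds' b where "ds = ds' @ [b]" "ds' \<in> set_pmf (run alg es n)"
    "b \<longrightarrow> (\<forall>f\<in>matched es ds'. f \<inter> es ! n = {})"
  using assms that by (auto split: if_splits)

lemma matched_take: "length ds \<le> m \<Longrightarrow> matched (take m es) ds = matched es ds"
  unfolding matched_def by force

lemma run_take: "n \<le> m \<Longrightarrow> run alg (take m es) n = run alg es n"
proof (induction n)
  case 0
  then show ?case by simp
next
  case (Suc n)
  have prefix: "take (Suc n) (take m es) = take (Suc n) es" and edge: "take m es ! n = es ! n"
    using Suc.prems by (simp_all add: min_def)
  have "matched (take m es) ds = matched es ds" if "ds \<in> set_pmf (run alg es n)" for ds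
    using that Suc.prems by (simp add: length_run matched_take)
  then show ?case
    unfolding run.simps prefix edge Suc.IH[OF Suc_leD[OF Suc.prems]]
    by (intro bind_pmf_cong) simp_all
qed

lemma run_cong_prefix: "take n es = take n es' \<Longrightarrow> run alg es n = run alg es' n"
  by (metis order_refl run_take)

lemma map_pmf_take_run: "m \<le> n \<Longrightarrow> map_pmf (take m) (run alg es n) = run alg es m"
proof (induction n)
  case 0
  then show ?case by simp
next
  case (Suc n)
  show ?case
  proof (cases "m = Suc n")
    case True
    then have "map_pmf (take m) (run alg es (Suc n)) = map_pmf id (run alg es (Suc n))"
      by (intro map_pmf_cong) (auto dest: length_run)
    then show ?thesis using True by simp
  next
    case False
    then have "m \<le> n" using Suc.prems by simp
    have "map_pmf (take m) (run alg es (Suc n)) = run alg es n \<bind> (\<lambda>ds. return_pmf (take m ds))"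
      unfolding run.simps map_bind_pmf
      using \<open>m \<le> n\<close> by (intro bind_pmf_cong) (simp_all add: map_bind_pmf bind_pmf_const length_run)
    also have "\<dots> = run alg es m"
      using Suc.IH \<open>m \<le> n\<close> by (simp add: map_pmf_def)
    finally show ?thesis .
  qed
qed

lemma run_accepted_disjoint:
  assumes "ds \<in> set_pmf (run alg es n)" "j < i" "i < n" "ds ! i" "ds ! j"
  shows "es ! j \<inter> es ! i = {}"
  using assms
proof (induction n arbitrary: ds)
  case 0
  then show ?case by simp
next
  case (Suc n)
  from Suc.prems(1) obtain ds' b where ds: "ds = ds' @ [b]" and ds': "ds' \<in> set_pmf (run alg es n)"
    and b: "b \<longrightarrow> (\<forall>f\<in>matched es ds'. f \<inter> es ! n = {})"
    by (rule set_pmf_run_Suc)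
  have len: "length ds' = n"
    using ds' by (rule length_run)
  show ?case
  proof (cases "i = n")
    case True
    then have "es ! j \<in> matched es ds'" "b"
      using Suc.prems ds len by (auto simp: matched_def nth_append)
    then show ?thesis using b True by blast
  next
    case False
    then show ?thesis
      using Suc.IH[OF ds'] Suc.prems ds len by (simp add: nth_append)
  qed
qed

definition accept_prob :: "online_alg \<Rightarrow> edge list \<Rightarrow> nat \<Rightarrow> real" where
  "accept_prob alg es i = measure_pmf.prob (run alg es (Suc i)) {ds. ds ! i}"

lemma accept_prob_cong_prefix:
  "take (Suc i) es = take (Suc i) es' \<Longrightarrow> accept_prob alg es i = accept_prob alg es' i"
  unfolding accept_prob_def by (metis run_cong_prefix)

lemma accept_prob_nonneg: "0 \<le> accept_prob alg es i"
  unfolding accept_prob_def by simp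

lemma prob_run_accepted:
  assumes "i < t"
  shows "measure_pmf.prob (run alg es t) {ds. ds ! i} = accept_prob alg es i"
proof -
  have "take (Suc i) -` {ds. ds ! i} = {ds :: bool list. ds ! i}"
    by auto
  moreover have "run alg es (Suc i) = map_pmf (take (Suc i)) (run alg es t)"
    using assms by (simp add: map_pmf_take_run)
  ultimately show ?thesis
    unfolding accept_prob_def by simp
qed

lemma expectation_card_accepted:
  assumes "I \<subseteq> {..<t}"
  shows "measure_pmf.expectation (run alg es t) (\<lambda>ds. real (card {i \<in> I. ds ! i}))
           = (\<Sum>i\<in>I. accept_prob alg es i)"
proof -
  have fin: "finite I"
    using assms finite_subset by blast
  have "real (card {i \<in> I. ds ! i}) = (\<Sum>i\<in>I. indicator {ds. ds ! i} ds)" for ds :: "bool list"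
    using fin by (simp add: indicator_def sum.If_cases Int_def)
  then have "measure_pmf.expectation (run alg es t) (\<lambda>ds. real (card {i \<in> I. ds ! i}))
      = (\<Sum>i\<in>I. measure_pmf.expectation (run alg es t) (indicator {ds. ds ! i}))"
    by (simp add: Bochner_Integration.integral_sum less_top[symmetric] measure_pmf.emeasure_finite)
  also have "\<dots> = (\<Sum>i\<in>I. accept_prob alg es i)"
    using assms by (intro sum.cong) (auto simp: prob_run_accepted)
  finally show ?thesis .
qed

lemma card_matched:
  assumes "distinct es" "length ds \<le> length es"
  shows "card (matched es ds) = card {i \<in> {..<length ds}. ds ! i}"
proof -
  have "matched es ds = (!) es ` {i \<in> {..<length ds}. ds ! i}"
    unfolding matched_def by auto
  moreover have "inj_on ((!) es) {i \<in> {..<length ds}. ds ! i}"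
    using assms by (auto simp: inj_on_def nth_eq_iff_index_eq)
  ultimately show ?thesis
    by (simp add: card_image)
qed

lemma expected_size_eq_sum_accept_prob:
  assumes "distinct es" "t \<le> length es"
  shows "expected_size alg es t = (\<Sum>i<t. accept_prob alg es i)"
proof -
  have "real (card (matched es ds)) = real (card {i \<in> {..<t}. ds ! i})"
    if "ds \<in> set_pmf (run alg es t)" for ds
    using that assms by (simp add: card_matched length_run)
  then have "expected_size alg es t
      = measure_pmf.expectation (run alg es t) (\<lambda>ds. real (card {i \<in> {..<t}. ds ! i}))"
    unfolding expected_size_def by (intro integral_cong_AE) (auto intro!: AE_pmfI)
  also have "\<dots> = (\<Sum>i<t. accept_prob alg es i)"
    by (rule expectation_card_accepted) simp
  finally show ?thesis .
qed

lemma sum_accept_prob_le_one: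
  assumes "I \<subseteq> {..<t}" and intersecting: "pairwise (\<lambda>i j. es ! i \<inter> es ! j \<noteq> {}) I"
  shows "(\<Sum>i\<in>I. accept_prob alg es i) \<le> 1"
proof -
  have "card {i \<in> I. ds ! i} \<le> 1" if "ds \<in> set_pmf (run alg es t)" for ds
  proof -
    have "i = j" if "i \<in> I" "j \<in> I" "ds ! i" "ds ! j" for i j
    proof (rule ccontr)
      assume "i \<noteq> j"
      then have "es ! i \<inter> es ! j \<noteq> {}"
        using intersecting that by (simp add: pairwise_def)
      moreover have "i < t" "j < t"
        using assms(1) that by auto
      ultimately show False
        using run_accepted_disjoint[OF \<open>ds \<in> _\<close>] \<open>i \<noteq> j\<close> that
        by (metis Int_commute linorder_neq_iff)
    qed
    moreover have "finite {i \<in> I. ds ! i}"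
      using assms(1) finite_subset by fastforce
    ultimately show ?thesis
      by (simp add: card_le_Suc0_iff_eq)
  qed
  then have "measure_pmf.expectation (run alg es t) (\<lambda>ds. real (card {i \<in> I. ds ! i})) \<le> 1"
    by (intro measure_pmf.integral_le_const) (auto intro!: AE_pmfI measure_pmf.integrable_const_bound[where B = 1])
  then show ?thesis
    using assms(1) by (simp add: expectation_card_accepted)
qed

lemma card_le_nu:
  assumes "finite E" "M \<subseteq> E" "is_matching M"
  shows "card M \<le> nu E"
proof -
  have "{card M | M. M \<subseteq> E \<and> is_matching M} \<subseteq> card ` Pow E"
    by auto
  then have "finite {card M | M. M \<subseteq> E \<and> is_matching M}"
    using assms(1) finite_subset by blast
  then show ?thesis
    unfolding nu_def using assms by (auto intro!: Max_ge)
qed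

lemma guarantee_sum_accept_prob:
  fixes \<gamma> :: real
  assumes "distinct es" "t \<le> length es" "0 \<le> \<gamma>" "k \<le> nu (set (take t es))"
    and guarantee: "\<gamma> * nu (set (take t es)) \<le> expected_size alg es t"
  shows "\<gamma> * real k \<le> (\<Sum>i<t. accept_prob alg es i)"
proof -
  have "\<gamma> * real k \<le> \<gamma> * nu (set (take t es))"
    using assms(3,4) by (simp add: mult_left_mono)
  also have "\<dots> \<le> (\<Sum>i<t. accept_prob alg es i)"
    using guarantee assms(1,2) by (simp add: expected_size_eq_sum_accept_prob)
  finally show ?thesis .
qed

lemma valid_instance_deg3I:
  assumes "distinct es" "\<forall>e\<in>set es. card e = 2" "\<And>v. length (filter ((\<in>) v) es) \<le> 3"
  shows "valid_instance_deg3 es"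
  using assms unfolding valid_instance_deg3_def
  by (metis distinct_card distinct_filter set_filter)

definition caterpillar :: "edge list" where
  "caterpillar = [{0,1}, {0,2}, {1,3}, {1,4}, {3,5}, {3,6}, {5,7}, {5,8}, {7,9}, {7,10},
     {9,11}, {9,12}, {11,13}, {11,14}, {13,15}, {13,16}, {15,17}, {15,18}, {17,19}, {17,20}]"

definition paw :: "edge list" where
  "paw = [{0,1}, {0,2}, {0,3}, {1,2}]"

lemma length_caterpillar: "length caterpillar = 20"
  by (simp add: caterpillar_def)

lemma caterpillar_valid: "valid_instance_deg3 caterpillar"
proof (rule valid_instance_deg3I)
  show "distinct caterpillar" "\<forall>e\<in>set caterpillar. card e = 2"
    by (simp_all add: caterpillar_def doubleton_eq_iff)
  show "length (filter ((\<in>) v) caterpillar) \<le> 3" for v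
  proof (cases "v \<le> 20")
    case True
    then have "v \<in> {..20}" by simp
    then show ?thesis unfolding caterpillar_def by (simp add: atMost_nat_numeral)
  next
    case False
    then show ?thesis unfolding caterpillar_def by simp
  qed
qed

lemma paw_valid: "valid_instance_deg3 paw"
proof (rule valid_instance_deg3I)
  show "distinct paw" "\<forall>e\<in>set paw. card e = 2"
    by (simp_all add: paw_def doubleton_eq_iff)
  show "length (filter ((\<in>) v) paw) \<le> 3" for v
    by (cases "v \<le> 3") (auto simp: paw_def atMost_nat_numeral)
qed

lemma caterpillar_nu:
  assumes "k < 10"
  shows "k + 1 \<le> nu (set (take (2 * k + 1) caterpillar))"
proof -
  define M where "M = set (caterpillar ! (2 * k) # map (\<lambda>j. caterpillar ! (2 * j + 1)) [0..<k])"
  have "k \<in> {0, 1, 2, 3, 4, 5, 6, 7, 8, 9}"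
    using assms by auto
  then have "M \<subseteq> set (take (2 * k + 1) caterpillar) \<and> is_matching M \<and> card M = k + 1"
    unfolding M_def
    by (elim insertE emptyE) (simp_all add: caterpillar_def is_matching_def upt_rec doubleton_eq_iff)
  then show ?thesis
    using card_le_nu[of "set (take (2 * k + 1) caterpillar)" M] by simp
qed

lemma caterpillar_packing:
  assumes "k < 9"
  shows "accept_prob alg caterpillar (2 * k) + accept_prob alg caterpillar (2 * k + 2)
           + accept_prob alg caterpillar (2 * k + 3) \<le> 1"
proof -
  have "k \<in> {0, 1, 2, 3, 4, 5, 6, 7, 8}"
    using assms by auto
  then have "\<forall>i\<in>{2 * k, 2 * k + 2, 2 * k + 3}. 2 * k + 1 \<in> caterpillar ! i"
    by (elim insertE emptyE) (simp_all add: caterpillar_def)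
  then have "pairwise (\<lambda>i j. caterpillar ! i \<inter> caterpillar ! j \<noteq> {}) {2 * k, 2 * k + 2, 2 * k + 3}"
    unfolding pairwise_def by blast
  then have "(\<Sum>i\<in>{2 * k, 2 * k + 2, 2 * k + 3}. accept_prob alg caterpillar i) \<le> 1"
    using assms by (intro sum_accept_prob_le_one[where t = 20]) auto
  then show ?thesis
    by simp
qed

lemma paw_nu: "2 \<le> nu (set paw)"
  using card_le_nu[of "set paw" "{{1, 2}, {0, 3}}"]
  by (simp add: paw_def is_matching_def doubleton_eq_iff)

lemma paw_bound:
  assumes "2 * \<gamma> \<le> (\<Sum>i<4. accept_prob alg paw i)"
  shows "accept_prob alg caterpillar 0 + accept_prob alg caterpillar 1 \<le> 2 - 2 * \<gamma>"
proof -
  have "accept_prob alg paw 0 = accept_prob alg caterpillar 0"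
    "accept_prob alg paw 1 = accept_prob alg caterpillar 1"
    by (simp_all add: accept_prob_cong_prefix paw_def caterpillar_def)
  moreover have "(\<Sum>i\<in>{0, 1, 2}. accept_prob alg paw i) \<le> 1" "(\<Sum>i\<in>{0, 1, 3}. accept_prob alg paw i) \<le> 1"
    by (rule sum_accept_prob_le_one[where t = 4]; simp add: paw_def pairwise_def)+
  ultimately show ?thesis
    using assms by (simp add: lessThan_nat_numeral)
qed

text \<open>Dual certificate: the weights 34, 21, 13, 8, 5, 3, 2, 1, 1, 1 on \<open>ratio\<close> and
\<open>packing\<close> (for k = 0, 1, ...) and 55 on \<open>paw\<close> add up to \<open>0 \<le> 198 - 341 \<gamma> - q 19\<close>.\<close>
lemma caterpillar_lp_bound:
  fixes q :: "nat \<Rightarrow> real" and \<gamma> :: real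
  assumes nonneg: "\<And>i. 0 \<le> q i"
    and ratio: "\<And>k. k < 10 \<Longrightarrow> \<gamma> * real (k + 1) \<le> (\<Sum>i<2 * k + 1. q i)"
    and packing: "\<And>k. k < 9 \<Longrightarrow> q (2 * k) + q (2 * k + 2) + q (2 * k + 3) \<le> 1"
    and paw: "q 0 + q 1 \<le> 2 - 2 * \<gamma>"
  shows "341 * \<gamma> \<le> 198"
  using ratio[of 0] ratio[of 1] ratio[of 2] ratio[of 3] ratio[of 4] ratio[of 5] ratio[of 6]
    ratio[of 7] ratio[of 8] ratio[of 9]
    packing[of 0] packing[of 1] packing[of 2] packing[of 3] packing[of 4] packing[of 5]
    packing[of 6] packing[of 7] packing[of 8] paw nonneg[of 19]
  by (simp add: lessThan_nat_numeral flip: numeral_2_eq_2)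

theorem mainTheorem2:
  fixes alg :: online_alg and \<gamma> :: real
  assumes "\<gamma> > 0.58065"
  shows "\<exists>es t. valid_instance_deg3 es \<and> t \<le> length es \<and>
           expected_size alg es t < \<gamma> * real (nu (set (take t es)))"
proof (rule ccontr)
  assume "\<not> ?thesis"
  then have guarantee: "\<And>es t. valid_instance_deg3 es \<Longrightarrow> t \<le> length es \<Longrightarrow>
      \<gamma> * nu (set (take t es)) \<le> expected_size alg es t"
    by (meson not_less)
  have distinct: "distinct caterpillar" "distinct paw"
    using caterpillar_valid paw_valid by (simp_all add: valid_instance_deg3_def)
  define q where "q = accept_prob alg caterpillar"
  have "\<gamma> * real 2 \<le> (\<Sum>i<4. accept_prob alg paw i)"
    using assms paw_nu
    by (intro guarantee_sum_accept_prob guarantee distinct paw_valid) (simp_all add: paw_def)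
  then have "q 0 + q 1 \<le> 2 - 2 * \<gamma>"
    unfolding q_def by (intro paw_bound) simp
  moreover have "\<gamma> * real (k + 1) \<le> (\<Sum>i<2 * k + 1. q i)" if "k < 10" for k
    unfolding q_def using that assms caterpillar_nu[OF that]
    by (intro guarantee_sum_accept_prob guarantee distinct caterpillar_valid)
      (simp_all add: length_caterpillar)
  moreover have "q (2 * k) + q (2 * k + 2) + q (2 * k + 3) \<le> 1" if "k < 9" for k
    unfolding q_def using that by (rule caterpillar_packing)
  moreover have "0 \<le> q i" for i
    unfolding q_def by (rule accept_prob_nonneg)
  ultimately have "341 * \<gamma> \<le> 198"
    by (intro caterpillar_lp_bound[of q])
  then show False
    using assms by simp
qed

end
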